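(* Let $K=2L$ with $L\ge1$ an integer, let $N\ge1$ be divisible by $L$, put $M=N/L$, and let $\alpha\in[0,2]$. Let $\sigma$ be the mixed strategy of $\mathcal{B}_\alpha(N,K)$ that randomizes uniformly over the $M+1$ pure strategies $(j,\,M-j,\,j,\,M-j,\,\ldots,\,j,\,M-j)'$, $j=0,1,\ldots,M$. Then $\sigma$ is a symmetric equilibrium strategy of $\mathcal{B}_\alpha(N,K)$. (In particular, in $\mathcal{B}_\alpha(6,4)$, uniform randomization over $(0,3,0,3)',(1,2,1,2)',(2,1,2,1)',(3,0,3,0)'$ is a symmetric equilibrium strategy.)
   Context: Fix integers $N\ge1$, $K\ge2$ and a real number $\alpha$. The Colonel Blotto game $\mathcal{B}_\alpha(N,K)$ is the two-player simultaneous-move game with players $A,B$, each with pure strategy set $S=\{s\in\{0,1,\ldots,N\}^K:\sum_{k=1}^K s_k=N\}$, in which the payoff of player $i$ at the pure profile $(s^i,s^{-i})$ is $\pi^i(s^i,s^{-i})=\sum_{k=1}^K\big(\mathbf 1[s^i_k>s^{-i}_k]+\tfrac{\alpha}{2}\mathbf 1[s^i_k=s^{-i}_k]\big)$. Mixed strategies are probability distributions on $S$, with expected payoffs under independent randomization. A symmetric equilibrium strategy is a mixed strategy $\sigma$ such that $(\sigma,\sigma)$ is a Nash equilibrium. *)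

theory Defs
  imports "HOL-Probability.Probability"
begin

definition blotto_strategies :: "nat \<Rightarrow> nat \<Rightarrow> (nat \<Rightarrow> nat) set" where
  "blotto_strategies N K = {s. (\<forall>k\<ge>K. s k = 0) \<and> (\<forall>k<K. s k \<le> N) \<and> (\<Sum>k<K. s k) = N}"

definition blotto_payoff :: "real \<Rightarrow> nat \<Rightarrow> (nat \<Rightarrow> nat) \<Rightarrow> (nat \<Rightarrow> nat) \<Rightarrow> real" where
  "blotto_payoff \<alpha> K s t = (\<Sum>k<K. (if s k > t k then 1 else 0) + (\<alpha> / 2) * (if s k = t k then 1 else 0))"

definition blotto_mixed :: "nat \<Rightarrow> nat \<Rightarrow> (nat \<Rightarrow> nat) pmf \<Rightarrow> bool" where
  "blotto_mixed N K p \<longleftrightarrow> set_pmf p \<subseteq> blotto_strategies N K"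

definition blotto_exp_payoff :: "real \<Rightarrow> nat \<Rightarrow> (nat \<Rightarrow> nat) pmf \<Rightarrow> (nat \<Rightarrow> nat) pmf \<Rightarrow> real" where
  "blotto_exp_payoff \<alpha> K p q = measure_pmf.expectation (pair_pmf p q) (\<lambda>(s, t). blotto_payoff \<alpha> K s t)"

text \<open>(sigma, sigma) is a Nash equilibrium: since the game is symmetric, both players' conditions
  are the same: no mixed deviation against sigma does better than sigma.\<close>
definition blotto_sym_eq :: "real \<Rightarrow> nat \<Rightarrow> nat \<Rightarrow> (nat \<Rightarrow> nat) pmf \<Rightarrow> bool" where
  "blotto_sym_eq \<alpha> N K \<sigma> \<longleftrightarrow> blotto_mixed N K \<sigma> \<and>
     (\<forall>\<tau>. blotto_mixed N K \<tau> \<longrightarrow> blotto_exp_payoff \<alpha> K \<tau> \<sigma> \<le> blotto_exp_payoff \<alpha> K \<sigma> \<sigma>)"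

end

theory Submission imports Defs begin

text \<open>Against \<open>\<sigma>\<close>, the allocation to every battlefield is uniform on \<open>{0..M}\<close>. Putting
  \<open>x\<close> troops on a battlefield therefore earns, summed over the \<open>M + 1\<close> strategies of \<open>\<sigma>\<close>, at
  most \<open>x + \<alpha>/2\<close>, with equality when \<open>x \<le> M\<close>. Summing over the battlefields bounds the
  payoff of every pure strategy against \<open>\<sigma>\<close> by \<open>(N + L\<alpha>)/(M + 1)\<close>, and the strategies in the
  support of \<open>\<sigma>\<close> attain this bound; hence no deviation from \<open>\<sigma>\<close> is profitable.\<close>

lemma finite_blotto_strategies: "finite (blotto_strategies N K)"
proof (rule finite_subset)
  show "blotto_strategies N K \<subseteq> {s. \<forall>k. (k \<in> {..<K} \<longrightarrow> s k \<in> {..N}) \<and> (k \<notin> {..<K} \<longrightarrow> s k = 0)}"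
    by (auto simp: blotto_strategies_def)
qed (rule finite_set_of_finite_funs; simp)

lemma finite_set_pmf_blotto_mixed: "blotto_mixed N K p \<Longrightarrow> finite (set_pmf p)"
  unfolding blotto_mixed_def by (rule finite_subset [OF _ finite_blotto_strategies])

lemma integral_pair_pmf_finite:
  fixes f :: "'a \<times> 'b \<Rightarrow> real"
  assumes "finite (set_pmf p)" and "finite (set_pmf q)"
  shows "(\<integral>x. f x \<partial>pair_pmf p q) = (\<integral>a. (\<integral>b. f (a, b) \<partial>q) \<partial>p)"
proof -
  have "(\<integral>x. f x \<partial>pair_pmf p q) = (\<Sum>x\<in>set_pmf p \<times> set_pmf q. f x * pmf (pair_pmf p q) x)"
    using assms by (intro integral_measure_pmf_real) auto
  also have "\<dots> = (\<Sum>(a, b)\<in>set_pmf p \<times> set_pmf q. f (a, b) * pmf q b * pmf p a)"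
    by (intro sum.cong) (auto simp: pmf_pair)
  also have "\<dots> = (\<Sum>a\<in>set_pmf p. (\<Sum>b\<in>set_pmf q. f (a, b) * pmf q b) * pmf p a)"
    by (simp add: sum.cartesian_product sum_distrib_right)
  also have "\<dots> = (\<integral>a. (\<integral>b. f (a, b) \<partial>q) \<partial>p)"
    using assms by (simp add: integral_measure_pmf_real)
  finally show ?thesis .
qed

definition blotto_pure_payoff :: "real \<Rightarrow> nat \<Rightarrow> (nat \<Rightarrow> nat) \<Rightarrow> (nat \<Rightarrow> nat) pmf \<Rightarrow> real" where
  "blotto_pure_payoff \<alpha> K s q = (\<integral>t. blotto_payoff \<alpha> K s t \<partial>q)"

lemma blotto_exp_payoff_eq_expectation_pure:
  assumes "blotto_mixed N K p" and "blotto_mixed N K q"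
  shows "blotto_exp_payoff \<alpha> K p q = (\<integral>s. blotto_pure_payoff \<alpha> K s q \<partial>p)"
  unfolding blotto_exp_payoff_def blotto_pure_payoff_def
  using assms by (simp add: integral_pair_pmf_finite finite_set_pmf_blotto_mixed)

lemma blotto_sym_eqI:
  assumes mixed: "blotto_mixed N K \<sigma>"
    and le: "\<And>s. s \<in> blotto_strategies N K \<Longrightarrow> blotto_pure_payoff \<alpha> K s \<sigma> \<le> v"
    and eq: "\<And>s. s \<in> set_pmf \<sigma> \<Longrightarrow> blotto_pure_payoff \<alpha> K s \<sigma> = v"
  shows "blotto_sym_eq \<alpha> N K \<sigma>"
proof -
  have "blotto_exp_payoff \<alpha> K \<sigma> \<sigma> = (\<integral>s. blotto_pure_payoff \<alpha> K s \<sigma> \<partial>\<sigma>)"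
    using mixed mixed by (rule blotto_exp_payoff_eq_expectation_pure)
  also have "\<dots> = (\<integral>s. v \<partial>\<sigma>)"
    using eq by (intro integral_cong_AE) (auto simp: AE_measure_pmf_iff)
  finally have self_payoff: "blotto_exp_payoff \<alpha> K \<sigma> \<sigma> = v"
    by simp
  have "blotto_exp_payoff \<alpha> K \<tau> \<sigma> \<le> v" if "blotto_mixed N K \<tau>" for \<tau>
  proof -
    have "blotto_exp_payoff \<alpha> K \<tau> \<sigma> = (\<integral>s. blotto_pure_payoff \<alpha> K s \<sigma> \<partial>\<tau>)"
      using that mixed by (rule blotto_exp_payoff_eq_expectation_pure)
    also have "\<dots> \<le> v"
      using that le
      by (intro measure_pmf.integral_le_const integrable_measure_pmf_finite finite_set_pmf_blotto_mixed)
         (auto simp: AE_measure_pmf_iff blotto_mixed_def)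
    finally show ?thesis .
  qed
  then show ?thesis
    using mixed self_payoff by (simp add: blotto_sym_eq_def)
qed

definition battlefield_score :: "real \<Rightarrow> nat \<Rightarrow> nat \<Rightarrow> real" where
  "battlefield_score \<alpha> M x = (\<Sum>j\<in>{0..M}. (if x > j then 1 else 0) + \<alpha>/2 * (if x = j then 1 else 0))"

lemma battlefield_score_eq_card:
  "battlefield_score \<alpha> M x = real (card {j\<in>{0..M}. j < x}) + \<alpha>/2 * (if x \<le> M then 1 else 0)"
proof -
  have wins: "(\<Sum>j\<in>{0..M}. (if x > j then 1 else 0::real)) = real (card {j\<in>{0..M}. j < x})"
    by (simp add: sum.If_cases Int_def)
  have ties: "(\<Sum>j\<in>{0..M}. \<alpha>/2 * (if x = j then 1 else 0::real)) = \<alpha>/2 * (if x \<le> M then 1 else 0)"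
    by (subst sum_distrib_left [symmetric]) (simp add: if_distrib [where f = "\<lambda>b. b = x"] cong: if_cong)
  show ?thesis
    unfolding battlefield_score_def sum.distrib wins ties ..
qed

lemma battlefield_score_le:
  assumes "0 \<le> \<alpha>"
  shows "battlefield_score \<alpha> M x \<le> real x + \<alpha>/2"
proof -
  have "card {j\<in>{0..M}. j < x} \<le> card {..<x}"
    by (intro card_mono) auto
  then show ?thesis
    using assms by (simp add: battlefield_score_eq_card)
qed

lemma battlefield_score_eq:
  assumes "x \<le> M"
  shows "battlefield_score \<alpha> M x = real x + \<alpha>/2"
proof -
  have "{j\<in>{0..M}. j < x} = {..<x}"
    using assms by auto
  then show ?thesis
    using assms by (simp add: battlefield_score_eq_card)
qed

lemma battlefield_score_reflect:
  "(\<Sum>j\<in>{0..M}. (if x > M - j then 1 else 0) + \<alpha>/2 * (if x = M - j then 1 else 0)) = battlefield_score \<alpha> M x"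
  unfolding battlefield_score_def by (subst sum.atLeastAtMost_rev) simp

definition alternating_strategy :: "nat \<Rightarrow> nat \<Rightarrow> nat \<Rightarrow> nat \<Rightarrow> nat" where
  "alternating_strategy L M j = (\<lambda>k. if k < 2 * L then (if even k then j else M - j) else 0)"

lemma sum_alternating_strategy:
  assumes "j \<le> M"
  shows "(\<Sum>k<2 * L. alternating_strategy L M j k) = L * M"
proof -
  have "(\<Sum>k<2 * L. (if even k then j else M - j)) = L * M" for L
    using assms by (induction L) auto
  then show ?thesis
    by (simp add: alternating_strategy_def)
qed

lemma alternating_strategy_in_blotto_strategies:
  assumes "j \<le> M"
  shows "alternating_strategy L M j \<in> blotto_strategies (L * M) (2 * L)"
proof -
  have "M \<le> L * M" if "k < 2 * L" for k
    using that by simp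
  then show ?thesis
    using assms sum_alternating_strategy [OF assms]
    by (auto simp: blotto_strategies_def alternating_strategy_def
        intro: le_trans [OF diff_le_self] le_trans [OF assms])
qed

lemma inj_on_alternating_strategy:
  assumes "L \<ge> 1"
  shows "inj_on (alternating_strategy L M) {0..M}"
proof (rule inj_onI)
  fix i j assume "alternating_strategy L M i = alternating_strategy L M j"
  then have "alternating_strategy L M i 0 = alternating_strategy L M j 0"
    by simp
  then show "i = j"
    using assms by (simp add: alternating_strategy_def)
qed

text \<open>On an odd battlefield the opposing allocations \<open>M - j\<close> run through \<open>{0..M}\<close> as well,
  so each battlefield contributes its \<open>battlefield_score\<close>.\<close>
lemma sum_blotto_payoff_alternating:
  "(\<Sum>j\<in>{0..M}. blotto_payoff \<alpha> (2 * L) s (alternating_strategy L M j))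
     = (\<Sum>k<2 * L. battlefield_score \<alpha> M (s k))"
proof -
  have "(\<Sum>j\<in>{0..M}. blotto_payoff \<alpha> (2 * L) s (alternating_strategy L M j))
      = (\<Sum>k<2 * L. \<Sum>j\<in>{0..M}. (if s k > alternating_strategy L M j k then 1 else 0)
            + \<alpha>/2 * (if s k = alternating_strategy L M j k then 1 else 0))"
    unfolding blotto_payoff_def by (rule sum.swap)
  also have "\<dots> = (\<Sum>k<2 * L. battlefield_score \<alpha> M (s k))"
  proof (intro sum.cong refl)
    fix k assume "k \<in> {..<2 * L}"
    then show "(\<Sum>j\<in>{0..M}. (if s k > alternating_strategy L M j k then 1 else 0)
            + \<alpha>/2 * (if s k = alternating_strategy L M j k then 1 else 0)) = battlefield_score \<alpha> M (s k)"
      using battlefield_score_reflect [of M "s k" \<alpha>]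
      by (cases "even k") (simp_all add: alternating_strategy_def battlefield_score_def)
  qed
  finally show ?thesis .
qed

lemma blotto_pure_payoff_alternating:
  assumes "L \<ge> 1"
  shows "blotto_pure_payoff \<alpha> (2 * L) s (pmf_of_set (alternating_strategy L M ` {0..M}))
           = (\<Sum>k<2 * L. battlefield_score \<alpha> M (s k)) / real (M + 1)"
  using inj_on_alternating_strategy [OF assms]
  by (simp add: blotto_pure_payoff_def integral_pmf_of_set sum.reindex card_image
      sum_blotto_payoff_alternating)

lemma sum_blotto_strategy_plus_const:
  "s \<in> blotto_strategies N K \<Longrightarrow> (\<Sum>k<K. real (s k) + c) = real N + K * c"
  by (simp add: sum.distrib blotto_strategies_def flip: of_nat_sum)

lemma blotto_pure_payoff_alternating_le:
  assumes "L \<ge> 1" and "0 \<le> \<alpha>" and "s \<in> blotto_strategies (L * M) (2 * L)"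
  shows "blotto_pure_payoff \<alpha> (2 * L) s (pmf_of_set (alternating_strategy L M ` {0..M}))
           \<le> (real (L * M) + L * \<alpha>) / real (M + 1)"
proof -
  have "(\<Sum>k<2 * L. battlefield_score \<alpha> M (s k)) \<le> (\<Sum>k<2 * L. real (s k) + \<alpha>/2)"
    by (intro sum_mono battlefield_score_le assms(2))
  then show ?thesis
    using sum_blotto_strategy_plus_const [OF assms(3), of "\<alpha>/2"]
    by (simp add: blotto_pure_payoff_alternating [OF assms(1)] divide_right_mono)
qed

lemma blotto_pure_payoff_alternating_eq:
  assumes "L \<ge> 1" and "j \<le> M"
  shows "blotto_pure_payoff \<alpha> (2 * L) (alternating_strategy L M j)
           (pmf_of_set (alternating_strategy L M ` {0..M}))
           = (real (L * M) + L * \<alpha>) / real (M + 1)"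
proof -
  have "(\<Sum>k<2 * L. battlefield_score \<alpha> M (alternating_strategy L M j k))
      = (\<Sum>k<2 * L. real (alternating_strategy L M j k) + \<alpha>/2)"
    using assms(2) by (intro sum.cong refl battlefield_score_eq) (auto simp: alternating_strategy_def)
  then show ?thesis
    using sum_blotto_strategy_plus_const [OF alternating_strategy_in_blotto_strategies [OF assms(2)]]
    by (simp add: blotto_pure_payoff_alternating [OF assms(1)])
qed

theorem mainTheorem11:
  fixes L N M :: nat and \<alpha> :: real
  assumes "L \<ge> 1" and "N \<ge> 1" and "L dvd N" and "M = N div L"
    and "0 \<le> \<alpha>" and "\<alpha> \<le> 2"
  shows "blotto_sym_eq \<alpha> N (2 * L)
           (pmf_of_set ((\<lambda>j. (\<lambda>k. if k < 2 * L then (if even k then j else M - j) else 0)) ` {0..M}))"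
proof -
  have N: "N = L * M"
    using assms(3,4) by simp
  have "blotto_sym_eq \<alpha> (L * M) (2 * L) (pmf_of_set (alternating_strategy L M ` {0..M}))"
  proof (rule blotto_sym_eqI)
    show "blotto_mixed (L * M) (2 * L) (pmf_of_set (alternating_strategy L M ` {0..M}))"
      using alternating_strategy_in_blotto_strategies by (auto simp: blotto_mixed_def)
    show "blotto_pure_payoff \<alpha> (2 * L) s (pmf_of_set (alternating_strategy L M ` {0..M}))
            \<le> (real (L * M) + L * \<alpha>) / real (M + 1)"
      if "s \<in> blotto_strategies (L * M) (2 * L)" for s
      using assms(1,5) that by (rule blotto_pure_payoff_alternating_le)
    show "blotto_pure_payoff \<alpha> (2 * L) s (pmf_of_set (alternating_strategy L M ` {0..M}))
            = (real (L * M) + L * \<alpha>) / real (M + 1)"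
      if "s \<in> set_pmf (pmf_of_set (alternating_strategy L M ` {0..M}))" for s
      using that by (auto simp: blotto_pure_payoff_alternating_eq [OF assms(1)])
  qed
  then show ?thesis
    by (simp add: N alternating_strategy_def)
qed

end
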